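(* There exists $\varphi_0>\frac{2\pi}{3}$ such that for every $s\in\mathbb C\setminus\{0\}$ with $|\arg s|<\varphi_0$ there exists $\sigma>0$ with $s\in\Omega_\sigma$.
   Context: For $\sigma>0$: $\Omega^1_\sigma=\{s:\Re s\le0,\ \sigma<|\Im s|\}\cup\{s:\Re s>0,\ \sigma<|s|\}$; $\Omega^2_\sigma=\{s:\ \sigma<|s|+\Re s,\ \sigma>\frac{-\Re(s)|s|}{2(|s|+\Re s)}\}$; $\Omega^3_\sigma=\{s\neq0:\ \sigma(|s|-\sigma+\Re s)-(\sigma(1+\frac{\Re s}{|s|})+\frac12\Re s)^2>0\}$; $\Omega_\sigma=\Omega^1_\sigma\cap(\Omega^2_\sigma\cup\Omega^3_\sigma)$. *)

theory Defs
  imports "HOL-Complex_Analysis.Complex_Analysis"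
begin

definition Omega1 :: "real \<Rightarrow> complex set" where
  "Omega1 \<sigma> = {s. Re s \<le> 0 \<and> \<sigma> < \<bar>Im s\<bar>} \<union> {s. Re s > 0 \<and> \<sigma> < cmod s}"

definition Omega2 :: "real \<Rightarrow> complex set" where
  "Omega2 \<sigma> = {s. \<sigma> < cmod s + Re s \<and> \<sigma> > - Re s * cmod s / (2 * (cmod s + Re s))}"

definition Omega3 :: "real \<Rightarrow> complex set" where
  "Omega3 \<sigma> = {s. s \<noteq> 0 \<and>
     \<sigma> * (cmod s - \<sigma> + Re s) - (\<sigma> * (1 + Re s / cmod s) + Re s / 2)^2 > 0}"

definition Omega :: "real \<Rightarrow> complex set" where
  "Omega \<sigma> = Omega1 \<sigma> \<inter> (Omega2 \<sigma> \<union> Omega3 \<sigma>)"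

end

theory Submission
  imports Defs
begin

text \<open>All three regions are invariant under the scaling \<open>(s, \<sigma>) \<mapsto> (\<lambda> s, \<lambda> \<sigma>)\<close>, \<open>\<lambda> > 0\<close>,
  so whether \<open>s \<in> \<Omega>\<^sub>\<sigma>\<close> for \<open>\<sigma> = t |s|\<close> only depends on \<open>t\<close> and \<open>c = cos (arg s)\<close>. For
  \<open>t = 3/10\<close>, the condition for \<open>\<Omega>\<^sup>1\<close> is \<open>c > 0 \<or> c\<^sup>2 < 91/100\<close>, \<open>\<Omega>\<^sup>2\<close> holds whenever \<open>c \<ge> 0\<close>,
  and \<open>\<Omega>\<^sup>3\<close> becomes \<open>12/100 - 18/100 c - 64/100 c\<^sup>2 > 0\<close>, which holds for \<open>-11/20 < c \<le> 0\<close>.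
  Since \<open>arccos (-11/20) > arccos (-1/2) = 2\<pi>/3\<close>, the angle \<open>\<phi>\<^sub>0 = arccos (-11/20)\<close> works.\<close>

lemma arccos_minus_half: "arccos (-1/2) = 2 * pi / 3"
proof -
  have "cos (2 * pi / 3) = - cos (pi / 3)"
    using cos_pi_minus[of "pi / 3"] by (simp add: field_simps)
  then have "cos (2 * pi / 3) = -1/2"
    by (simp add: cos_60)
  moreover have "arccos (cos (2 * pi / 3)) = 2 * pi / 3"
    by (rule arccos_cos) (use pi_gt_zero in auto)
  ultimately show ?thesis
    by simp
qed

lemma cos_Arg_gt_if_abs_Arg_less_arccos:
  fixes s :: complex
  assumes "s \<noteq> 0" "-1 \<le> a" "a \<le> 1" "\<bar>Arg s\<bar> < arccos a"
  shows "a < Re s / cmod s"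
proof -
  have "cos (arccos a) < cos \<bar>Arg s\<bar>"
    using assms Arg_bounded[of s] arccos_ubound[of a] by (subst cos_mono_less_eq) auto
  then show ?thesis
    using assms cos_Arg[of s] by simp
qed

lemma mem_Omega1_scaled:
  fixes s :: complex
  defines "c \<equiv> Re s / cmod s"
  assumes "s \<noteq> 0" "0 \<le> t" "t < 1" "c \<le> 0 \<Longrightarrow> t\<^sup>2 + c\<^sup>2 < 1"
  shows "s \<in> Omega1 (t * cmod s)"
proof (cases "Re s \<le> 0")
  case True
  have r: "cmod s > 0" using assms by simp
  have "c \<le> 0" using True r by (simp add: c_def divide_nonpos_pos)
  then have "(t * cmod s)\<^sup>2 < (cmod s)\<^sup>2 - (Re s)\<^sup>2"
    using assms(5) r by (simp add: c_def field_simps power2_eq_square)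
  also have "\<dots> = (Im s)\<^sup>2"
    by (simp add: cmod_power2)
  finally have "t * cmod s < \<bar>Im s\<bar>"
    by (metis abs_ge_zero power2_abs power2_less_imp_less)
  with True show ?thesis
    unfolding Omega1_def by simp
next
  case False
  then show ?thesis
    using assms by (simp add: Omega1_def)
qed

lemma mem_Omega2_if_Re_nonneg:
  assumes "0 < \<sigma>" "\<sigma> < cmod s" "0 \<le> Re s"
  shows "s \<in> Omega2 \<sigma>"
proof -
  have "- Re s * cmod s / (2 * (cmod s + Re s)) \<le> 0"
    using assms by (intro divide_nonpos_nonneg) auto
  with assms show ?thesis
    unfolding Omega2_def mem_Collect_eq by linarith
qed

lemma mem_Omega3_scaled_iff:
  fixes s :: complex
  defines "c \<equiv> Re s / cmod s"
  assumes "s \<noteq> 0"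
  shows "s \<in> Omega3 (t * cmod s) \<longleftrightarrow> t * (1 - t + c) - (t * (1 + c) + c / 2)\<^sup>2 > 0"
proof -
  have r: "cmod s > 0" using assms by simp
  have "t * cmod s * (cmod s - t * cmod s + Re s) - (t * cmod s * (1 + c) + Re s / 2)\<^sup>2
      = (cmod s)\<^sup>2 * (t * (1 - t + c) - (t * (1 + c) + c / 2)\<^sup>2)"
    using r by (simp add: c_def field_simps power2_eq_square)
  with r assms(2) show ?thesis
    unfolding Omega3_def mem_Collect_eq c_def[symmetric] by (simp add: zero_less_mult_iff)
qed

lemma Omega3_condition_three_tenths:
  fixes c :: real
  assumes "-11/20 < c" "c \<le> 0"
  shows "3/10 * (1 - 3/10 + c) - (3/10 * (1 + c) + c / 2)\<^sup>2 > 0"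
proof -
  have "16 * c\<^sup>2 + 9/2 * c - 473/200 = (c + 11/20) * (16 * c - 43/10)"
    by (simp add: algebra_simps power2_eq_square)
  also have "\<dots> \<le> 0"
    using assms by (intro mult_nonneg_nonpos) auto
  finally have "0 < (3 - 9/2 * c - 16 * c\<^sup>2) / 25"
    by simp
  also have "\<dots> = 3/10 * (1 - 3/10 + c) - (3/10 * (1 + c) + c / 2)\<^sup>2"
    by (simp add: field_simps power2_eq_square)
  finally show ?thesis .
qed

lemma mem_Omega_three_tenths_cmod:
  fixes s :: complex
  assumes "s \<noteq> 0" "-11/20 < Re s / cmod s"
  shows "s \<in> Omega (3/10 * cmod s)"
proof -
  define c where "c = Re s / cmod s"
  have r: "cmod s > 0" using assms by simp
  have "(3/10)\<^sup>2 + c\<^sup>2 < 1" if "c \<le> 0"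
  proof -
    have "(- c)\<^sup>2 < (11/20)\<^sup>2"
      using that assms(2) by (intro power_strict_mono) (auto simp: c_def)
    then show ?thesis
      by (simp add: power2_eq_square)
  qed
  then have "s \<in> Omega1 (3/10 * cmod s)"
    using assms by (intro mem_Omega1_scaled) (simp_all add: c_def)
  moreover have "s \<in> Omega2 (3/10 * cmod s) \<union> Omega3 (3/10 * cmod s)"
  proof (cases "0 \<le> Re s")
    case True
    then show ?thesis
      using r mem_Omega2_if_Re_nonneg[of "3/10 * cmod s" s] by simp
  next
    case False
    then have "c \<le> 0" using r by (simp add: c_def divide_nonpos_pos)
    then show ?thesis
      using Omega3_condition_three_tenths[of c] mem_Omega3_scaled_iff[OF assms(1), of "3/10"] assms(2)
      by (simp add: c_def)
  qed
  ultimately show ?thesis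
    unfolding Omega_def by blast
qed

theorem mainTheorem10:
  shows "\<exists>\<phi>0 > 2 * pi / 3. \<forall>s::complex. s \<noteq> 0 \<and> \<bar>Arg s\<bar> < \<phi>0 \<longrightarrow>
           (\<exists>\<sigma>>0. s \<in> Omega \<sigma>)"
proof (rule exI[of _ "arccos (-11/20)"], intro conjI allI impI)
  show "2 * pi / 3 < arccos (-11/20)"
    using arccos_less_arccos[of "-11/20" "-1/2"] arccos_minus_half by simp
  fix s :: complex
  assume s: "s \<noteq> 0 \<and> \<bar>Arg s\<bar> < arccos (-11/20)"
  then have "-11/20 < Re s / cmod s"
    by (intro cos_Arg_gt_if_abs_Arg_less_arccos) auto
  with s have "s \<in> Omega (3/10 * cmod s)"
    by (intro mem_Omega_three_tenths_cmod) auto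
  moreover have "3/10 * cmod s > 0"
    using s by simp
  ultimately show "\<exists>\<sigma>>0. s \<in> Omega \<sigma>"
    by blast
qed

end
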